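(* Let $G,H$ be $p$-regular multigraphs that are not isomorphic. Then $\mathbb{E}_{W\sim\mathrm{Wig}}\, m^c_G(W)\,m^c_H(W)=0$.
   Context: $\mathrm{Wig}$ is the law of the symmetric tensor $W\in\mathrm{Sym}^p(\mathbb{R}^n)$ with $W_{i_1,\dots,i_p}=\frac{1}{\sqrt{p!}}\sum_{\pi\in S_p}G_{i_{\pi(1)},\dots,i_{\pi(p)}}$, $G$ with i.i.d. $\mathcal{N}(0,1)$ entries; $T_S$ denotes the entry of a symmetric tensor indexed by a multiset $S$. Multigraphs $G=(V,E)$ may have loops and parallel edges (loop contributes 2 to degree). For $i\in[n]^E$, $i(\partial v)$ is the multiset of labels of edges at $v$ (loops counted twice). A Frobenius pair is a connected component consisting of two vertices joined by $p$ parallel edges; with $U$ the set of vertices in Frobenius pairs, $i(\pi)$ the multiset of edge labels of a pair $\pi$, and $b=|E|$, $m^c_G(T)=\sum_{i\in[n]^E,\ i_1,\dots,i_b\text{ distinct}}\big[\prod_{v\in V\setminus U}T_{i(\partial v)}\prod_\pi(T_{i(\pi)}^2-1)\big]$, the product over Frobenius pairs $\pi$ of $G$; $m^c_\emptyset=1$. *)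

theory Defs
  imports "HOL-Probability.Probability"
begin

text \<open>A multigraph: vertex set, edge set, and for each edge the multiset of its
two endpoints (a loop at v has ends {#v,v#}).\<close>
record ('v,'e) mgraph =
  verts :: "'v set"
  edges :: "'e set"
  ends  :: "'e \<Rightarrow> 'v multiset"

definition wf_mgraph :: "('v,'e) mgraph \<Rightarrow> bool" where
  "wf_mgraph G \<longleftrightarrow> finite (verts G) \<and> finite (edges G) \<and>
     (\<forall>e\<in>edges G. size (ends G e) = 2 \<and> set_mset (ends G e) \<subseteq> verts G)"

text \<open>Degree; a loop contributes 2.\<close>
definition mdeg :: "('v,'e) mgraph \<Rightarrow> 'v \<Rightarrow> nat" where
  "mdeg G v = (\<Sum>e\<in>edges G. count (ends G e) v)"

definition regular :: "nat \<Rightarrow> ('v,'e) mgraph \<Rightarrow> bool" where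
  "regular p G \<longleftrightarrow> wf_mgraph G \<and> (\<forall>v\<in>verts G. mdeg G v = p)"

definition mgraph_iso :: "('v,'e) mgraph \<Rightarrow> ('w,'f) mgraph \<Rightarrow> bool" where
  "mgraph_iso G H \<longleftrightarrow> (\<exists>f h. bij_betw f (verts G) (verts H) \<and> bij_betw h (edges G) (edges H) \<and>
     (\<forall>e\<in>edges G. ends H (h e) = image_mset f (ends G e)))"

definition frob_pair :: "nat \<Rightarrow> ('v,'e) mgraph \<Rightarrow> 'v \<Rightarrow> 'v \<Rightarrow> bool" where
  "frob_pair p G u w \<longleftrightarrow> u \<in> verts G \<and> w \<in> verts G \<and> u \<noteq> w \<and>
     (\<forall>e\<in>edges G. (u \<in># ends G e \<or> w \<in># ends G e) \<longrightarrow> ends G e = {#u, w#}) \<and>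
     card {e\<in>edges G. ends G e = {#u, w#}} = p"

definition frob_verts :: "nat \<Rightarrow> ('v,'e) mgraph \<Rightarrow> 'v set" where
  "frob_verts p G = {u\<in>verts G. \<exists>w. frob_pair p G u w}"

definition frob_pairs :: "nat \<Rightarrow> ('v,'e) mgraph \<Rightarrow> 'v set set" where
  "frob_pairs p G = {{u, w} | u w. frob_pair p G u w}"

text \<open>i(\<partial>v): multiset of labels of edges at v (loops counted twice).\<close>
definition lab_at :: "('v,'e) mgraph \<Rightarrow> ('e \<Rightarrow> nat) \<Rightarrow> 'v \<Rightarrow> nat multiset" where
  "lab_at G i v = (\<Sum>e\<in>edges G. replicate_mset (count (ends G e) v) (i e))"

definition lab_pair :: "('v,'e) mgraph \<Rightarrow> ('e \<Rightarrow> nat) \<Rightarrow> 'v set \<Rightarrow> nat multiset" where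
  "lab_pair G i P = image_mset i (mset_set {e\<in>edges G. set_mset (ends G e) = P})"

text \<open>m^c_G(T), with T a symmetric tensor given by its entries T_S indexed by multisets S
of indices in [n] = {0..<n}.\<close>
definition mc :: "nat \<Rightarrow> nat \<Rightarrow> ('v,'e) mgraph \<Rightarrow> (nat multiset \<Rightarrow> real) \<Rightarrow> real" where
  "mc n p G T = (\<Sum>i\<in>{i\<in>edges G \<rightarrow>\<^sub>E {..<n}. inj_on i (edges G)}.
      (\<Prod>v\<in>verts G - frob_verts p G. T (lab_at G i v)) *
      (\<Prod>P\<in>frob_pairs p G. (T (lab_pair G i P))\<^sup>2 - 1))"

definition tuples :: "nat \<Rightarrow> nat \<Rightarrow> nat list set" where
  "tuples n p = {xs. length xs = p \<and> set xs \<subseteq> {..<n}}"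

definition std_gauss :: "real measure" where
  "std_gauss = density lborel std_normal_density"

definition gauss_tensor :: "nat \<Rightarrow> nat \<Rightarrow> (nat list \<Rightarrow> real) measure" where
  "gauss_tensor n p = PiM (tuples n p) (\<lambda>_. std_gauss)"

text \<open>W_{i_1..i_p} = (1/sqrt p!) sum_{\<pi>\<in>S_p} G_{i_\<pi>(1)..i_\<pi>(p)}; the entry W_S for a
multiset S is obtained from any ordering of S (here the sorted one).\<close>
definition wig_tensor :: "nat \<Rightarrow> (nat list \<Rightarrow> real) \<Rightarrow> nat multiset \<Rightarrow> real" where
  "wig_tensor p g S = (let xs = sorted_list_of_multiset S in
     (1 / sqrt (fact p)) * (\<Sum>\<pi>\<in>{\<pi>. \<pi> permutes {..<p}}. g (map (\<lambda>k. xs ! \<pi> k) [0..<p])))"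

end

(*
  Expanding both sides over injective edge labellings i, the summand of m^c_G belonging to i is
  prod_{S in A} W_S * prod_{S in Q} (W_S^2 - 1): two distinct vertices of a p-regular multigraph
  carry the same label multiset only if they form a Frobenius pair, so A (labels of vertices
  outside Frobenius pairs) and Q (labels of Frobenius pairs, which have no repeated entry) are
  disjoint sets and each label occurs once or twice.  Entries W_S with different S are functions
  of disjoint sets of independent standard Gaussians.  For two such products with different
  (A, Q): if some S lies in exactly one of the A's, negating the Gaussians indexed by orderings
  of S makes the integrand odd; otherwise some S lies in exactly one of the Q's and occurs only
  in the factor W_S^2 - 1, which is independent of the rest and has mean 0 since the p! orderings
  of a repetition-free S are distinct coordinates.  Equal (A, Q), on the other hand, give label
  fibres of equal sizes in G and H, and matching vertices, and then edges, with equal labels is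
  an isomorphism.
*)
theory Submission
  imports Defs
begin

section \<open>Products of standard Gaussians\<close>

lemma prob_space_std_gauss: "prob_space std_gauss"
  unfolding std_gauss_def by (rule prob_space_normal_density) simp

lemma sets_std_gauss [simp]: "sets std_gauss = sets borel"
  and space_std_gauss [simp]: "space std_gauss = UNIV"
  by (simp_all add: std_gauss_def)

lemma integral_std_gauss_moment:
  "(\<integral>x. x ^ k \<partial>std_gauss) = (\<integral>x. std_normal_density x * x ^ k \<partial>lborel)"
  unfolding std_gauss_def by (subst integral_density) (auto simp: normal_density_nonneg)

lemma std_gauss_mean: "(\<integral>x. x \<partial>std_gauss) = 0"
  using integral_std_gauss_moment[of 1] integral_std_normal_moment_odd[of 0] by simp

lemma std_gauss_second_moment: "(\<integral>x. x\<^sup>2 \<partial>std_gauss) = 1"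
  using integral_std_gauss_moment[of 2] integral_std_normal_moment_even[of 1] by simp

lemma integrable_std_gauss_abs_power: "integrable std_gauss (\<lambda>x. \<bar>x\<bar> ^ k)"
  unfolding std_gauss_def
  by (subst integrable_density) (auto simp: normal_density_nonneg integrable_std_normal_moment_abs)

lemma integrable_std_gauss_one_plus_abs_power: "integrable std_gauss (\<lambda>x. (1 + \<bar>x\<bar>) ^ k)"
  unfolding binomial_ring
  by (auto intro!: integrable_sum integrable_mult_left integrable_std_gauss_abs_power)

lemma distr_std_gauss_uminus: "distr std_gauss std_gauss uminus = std_gauss"
proof -
  let ?f = "\<lambda>x. ennreal (std_normal_density x)"
  have "distr (density (distr lborel lborel uminus) ?f) lborel uminus =
      density lborel (?f \<circ> uminus)"
    by (rule distr_density_distr) auto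
  moreover have "distr lborel lborel uminus = (lborel :: real measure)"
    using lborel_distr_uminus by (metis distr_cong sets_lborel)
  moreover have "?f \<circ> uminus = ?f"
    by (auto simp: normal_density_def fun_eq_iff)
  ultimately have "distr std_gauss lborel uminus = std_gauss"
    by (simp add: std_gauss_def)
  then show ?thesis
    by (metis distr_cong sets_std_gauss sets_lborel)
qed

interpretation std_gauss_product: product_sigma_finite "\<lambda>_::'i. std_gauss"
  unfolding product_sigma_finite_def
  using prob_space_imp_sigma_finite[OF prob_space_std_gauss] by simp

abbreviation gauss_PiM :: "'i set \<Rightarrow> ('i \<Rightarrow> real) measure" where
  "gauss_PiM I \<equiv> PiM I (\<lambda>_. std_gauss)"

lemma measurable_coordinate_gauss_PiM:
  "a \<in> I \<Longrightarrow> (\<lambda>g. g a) \<in> borel_measurable (gauss_PiM I)"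
  using measurable_component_singleton[of a I "\<lambda>_. std_gauss"]
  by (simp cong: measurable_cong_sets)

definition poly_growth :: "'i set \<Rightarrow> (('i \<Rightarrow> real) \<Rightarrow> real) \<Rightarrow> bool" where
  "poly_growth I f \<longleftrightarrow> f \<in> borel_measurable (gauss_PiM I) \<and>
     (\<exists>C K. \<forall>g\<in>space (gauss_PiM I). \<bar>f g\<bar> \<le> C * (\<Prod>a\<in>I. 1 + \<bar>g a\<bar>) ^ K)"

lemma prod_one_plus_abs_ge_1: "1 \<le> (\<Prod>a\<in>I. 1 + \<bar>g a :: real\<bar>)"
  by (intro prod_ge_1) auto

lemma poly_growth_integrable:
  assumes "finite I" and "poly_growth I f"
  shows "integrable (gauss_PiM I) f"
proof -
  obtain C K where f: "f \<in> borel_measurable (gauss_PiM I)"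
    and bound: "\<And>g. g \<in> space (gauss_PiM I) \<Longrightarrow> \<bar>f g\<bar> \<le> C * (\<Prod>a\<in>I. 1 + \<bar>g a\<bar>) ^ K"
    using assms(2) unfolding poly_growth_def by blast
  have "integrable (gauss_PiM I) (\<lambda>g. \<Prod>a\<in>I. (1 + \<bar>g a\<bar>) ^ K)"
    using assms(1)
    by (intro std_gauss_product.product_integrable_prod integrable_std_gauss_one_plus_abs_power)
  then have "integrable (gauss_PiM I) (\<lambda>g. C * (\<Prod>a\<in>I. 1 + \<bar>g a\<bar>) ^ K)"
    by (simp add: prod_power_distrib)
  then show ?thesis
    by (rule Bochner_Integration.integrable_bound)
      (use f in \<open>auto intro!: AE_I2 order_trans[OF bound abs_ge_self]\<close>)
qed

lemma poly_growth_const: "poly_growth I (\<lambda>_. c)"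
  unfolding poly_growth_def by (intro conjI exI[of _ "\<bar>c\<bar>"] exI[of _ 0]) auto

lemma poly_growth_coordinate:
  assumes "finite I" and "a \<in> I"
  shows "poly_growth I (\<lambda>g. g a)"
  unfolding poly_growth_def
proof (intro conjI exI[of _ 1] ballI measurable_coordinate_gauss_PiM assms(2))
  fix g :: "'a \<Rightarrow> real"
  have "1 + \<bar>g a\<bar> \<le> (1 + \<bar>g a\<bar>) * (\<Prod>b\<in>I - {a}. 1 + \<bar>g b\<bar>)"
    using mult_left_mono[OF prod_one_plus_abs_ge_1, of "1 + \<bar>g a\<bar>"] by simp
  then show "\<bar>g a\<bar> \<le> 1 * (\<Prod>b\<in>I. 1 + \<bar>g b\<bar>) ^ 1"
    using assms by (simp add: prod.remove)
qed

lemma poly_growth_add: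
  assumes "poly_growth I f" and "poly_growth I h"
  shows "poly_growth I (\<lambda>g. f g + h g)"
proof -
  obtain C1 K1 C2 K2 where meas: "f \<in> borel_measurable (gauss_PiM I)" "h \<in> borel_measurable (gauss_PiM I)"
    and bound: "\<And>g. g \<in> space (gauss_PiM I) \<Longrightarrow> \<bar>f g\<bar> \<le> C1 * (\<Prod>a\<in>I. 1 + \<bar>g a\<bar>) ^ K1"
      "\<And>g. g \<in> space (gauss_PiM I) \<Longrightarrow> \<bar>h g\<bar> \<le> C2 * (\<Prod>a\<in>I. 1 + \<bar>g a\<bar>) ^ K2"
    using assms unfolding poly_growth_def by blast
  show ?thesis unfolding poly_growth_def
  proof (intro conjI exI[of _ "\<bar>C1\<bar> + \<bar>C2\<bar>"] exI[of _ "K1 + K2"] ballI)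
    show "(\<lambda>g. f g + h g) \<in> borel_measurable (gauss_PiM I)" using meas by measurable
    fix g assume g: "g \<in> space (gauss_PiM I)"
    define w where "w = (\<Prod>a\<in>I. 1 + \<bar>g a\<bar>)"
    have "1 \<le> w" unfolding w_def by (rule prod_one_plus_abs_ge_1)
    then have "w ^ K1 \<le> w ^ (K1 + K2)" "w ^ K2 \<le> w ^ (K1 + K2)"
      by (simp_all add: power_increasing)
    then have "C1 * w ^ K1 \<le> \<bar>C1\<bar> * w ^ (K1 + K2)" "C2 * w ^ K2 \<le> \<bar>C2\<bar> * w ^ (K1 + K2)"
      using \<open>1 \<le> w\<close> by (smt (verit) mult_mono abs_ge_self abs_ge_zero zero_le_power)+
    then show "\<bar>f g + h g\<bar> \<le> (\<bar>C1\<bar> + \<bar>C2\<bar>) * w ^ (K1 + K2)"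
      using bound[OF g] unfolding w_def[symmetric] by (simp add: distrib_right)
  qed
qed

lemma poly_growth_mult:
  assumes "poly_growth I f" and "poly_growth I h"
  shows "poly_growth I (\<lambda>g. f g * h g)"
proof -
  obtain C1 K1 C2 K2 where meas: "f \<in> borel_measurable (gauss_PiM I)" "h \<in> borel_measurable (gauss_PiM I)"
    and bound: "\<And>g. g \<in> space (gauss_PiM I) \<Longrightarrow> \<bar>f g\<bar> \<le> C1 * (\<Prod>a\<in>I. 1 + \<bar>g a\<bar>) ^ K1"
      "\<And>g. g \<in> space (gauss_PiM I) \<Longrightarrow> \<bar>h g\<bar> \<le> C2 * (\<Prod>a\<in>I. 1 + \<bar>g a\<bar>) ^ K2"
    using assms unfolding poly_growth_def by blast
  show ?thesis unfolding poly_growth_def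
  proof (intro conjI exI[of _ "C1 * C2"] exI[of _ "K1 + K2"] ballI)
    show "(\<lambda>g. f g * h g) \<in> borel_measurable (gauss_PiM I)" using meas by measurable
    fix g assume g: "g \<in> space (gauss_PiM I)"
    have "\<bar>f g * h g\<bar> \<le> (C1 * (\<Prod>a\<in>I. 1 + \<bar>g a\<bar>) ^ K1) * (C2 * (\<Prod>a\<in>I. 1 + \<bar>g a\<bar>) ^ K2)"
      unfolding abs_mult using bound[OF g] by (intro mult_mono) auto
    then show "\<bar>f g * h g\<bar> \<le> C1 * C2 * (\<Prod>a\<in>I. 1 + \<bar>g a\<bar>) ^ (K1 + K2)"
      by (simp add: power_add mult_ac)
  qed
qed

lemma poly_growth_diff:
  assumes "poly_growth I f" and "poly_growth I h"
  shows "poly_growth I (\<lambda>g. f g - h g)"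
proof -
  have "poly_growth I (\<lambda>g. f g + (- 1) * h g)"
    by (intro poly_growth_add poly_growth_mult poly_growth_const assms)
  then show ?thesis by simp
qed

lemma poly_growth_sum:
  "finite A \<Longrightarrow> (\<And>x. x \<in> A \<Longrightarrow> poly_growth I (f x)) \<Longrightarrow> poly_growth I (\<lambda>g. \<Sum>x\<in>A. f x g)"
  by (induction A rule: finite_induct) (auto intro: poly_growth_const poly_growth_add)

lemma poly_growth_prod:
  "finite A \<Longrightarrow> (\<And>x. x \<in> A \<Longrightarrow> poly_growth I (f x)) \<Longrightarrow> poly_growth I (\<lambda>g. \<Prod>x\<in>A. f x g)"
  by (induction A rule: finite_induct) (auto intro: poly_growth_const poly_growth_mult)

definition negate_on :: "'i set \<Rightarrow> ('i \<Rightarrow> real) \<Rightarrow> 'i \<Rightarrow> real" where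
  "negate_on B g = (\<lambda>l. if l \<in> B then - g l else g l)"

lemma measurable_negate_on:
  assumes "B \<subseteq> I"
  shows "negate_on B \<in> measurable (gauss_PiM I) (gauss_PiM I)"
  unfolding negate_on_def
proof (rule measurable_PiM_single')
  fix l assume "l \<in> I"
  then show "(\<lambda>g. if l \<in> B then - g l else g l) \<in> measurable (gauss_PiM I) std_gauss"
    using measurable_coordinate_gauss_PiM[of l I] by (simp cong: measurable_cong_sets)
next
  show "(\<lambda>g l. if l \<in> B then - g l else g l) \<in> space (gauss_PiM I) \<rightarrow> (\<Pi>\<^sub>E l\<in>I. space std_gauss)"
    using assms by (auto simp: space_PiM PiE_def extensional_def)
qed

lemma distr_gauss_PiM_negate_on:
  assumes "finite I" and "B \<subseteq> I"
  shows "distr (gauss_PiM I) (gauss_PiM I) (negate_on B) = gauss_PiM I"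
proof (rule std_gauss_product.PiM_eqI[OF assms(1)])
  show "sets (distr (gauss_PiM I) (gauss_PiM I) (negate_on B)) = sets (gauss_PiM I)" by simp
  fix A assume A: "\<And>l. l \<in> I \<Longrightarrow> A l \<in> sets std_gauss"
  define A' where "A' l = (if l \<in> B then uminus -` A l else A l)" for l
  have A'_sets: "A' l \<in> sets std_gauss" if "l \<in> I" for l
    using A[OF that] measurable_sets_borel[of "uminus :: real \<Rightarrow> real" borel "A l"]
    by (auto simp: A'_def)
  have A'_measure: "emeasure std_gauss (A' l) = emeasure std_gauss (A l)" if "l \<in> I" for l
  proof -
    have "emeasure std_gauss (uminus -` A l) = emeasure (distr std_gauss std_gauss uminus) (A l)"
      using A[OF that]
      by (subst emeasure_distr) (auto simp: measurable_cong_sets[OF sets_std_gauss sets_std_gauss])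
    then show ?thesis by (simp add: A'_def distr_std_gauss_uminus)
  qed
  have "negate_on B -` Pi\<^sub>E I A \<inter> space (gauss_PiM I) = Pi\<^sub>E I A'"
    using assms(2)
    by (auto simp: negate_on_def A'_def space_PiM PiE_iff extensional_def split: if_splits; metis)
  then have "emeasure (distr (gauss_PiM I) (gauss_PiM I) (negate_on B)) (Pi\<^sub>E I A) =
      emeasure (gauss_PiM I) (Pi\<^sub>E I A')"
    using A assms(1)
    by (subst emeasure_distr[OF measurable_negate_on[OF assms(2)]]) (auto intro: sets_PiM_I_finite)
  also have "\<dots> = (\<Prod>l\<in>I. emeasure std_gauss (A l))"
    using assms(1) A'_sets A'_measure by (simp add: std_gauss_product.emeasure_PiM)
  finally show "emeasure (distr (gauss_PiM I) (gauss_PiM I) (negate_on B)) (Pi\<^sub>E I A) =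
      (\<Prod>l\<in>I. emeasure std_gauss (A l))" .
qed

lemma integral_gauss_PiM_odd:
  fixes f :: "('i \<Rightarrow> real) \<Rightarrow> real"
  assumes "finite I" and "B \<subseteq> I" and f: "integrable (gauss_PiM I) f"
    and odd: "\<And>g. g \<in> space (gauss_PiM I) \<Longrightarrow> f (negate_on B g) = - f g"
  shows "(\<integral>g. f g \<partial>gauss_PiM I) = 0"
proof -
  have "(\<integral>g. f g \<partial>gauss_PiM I) = (\<integral>g. f g \<partial>distr (gauss_PiM I) (gauss_PiM I) (negate_on B))"
    using assms(1,2) by (simp add: distr_gauss_PiM_negate_on)
  also have "\<dots> = (\<integral>g. f (negate_on B g) \<partial>gauss_PiM I)"
    by (rule integral_distr[OF measurable_negate_on[OF assms(2)] borel_measurable_integrable[OF f]])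
  also have "\<dots> = (\<integral>g. - f g \<partial>gauss_PiM I)"
    using odd by (intro Bochner_Integration.integral_cong) auto
  finally show ?thesis by simp
qed

lemma integral_gauss_PiM_coordinate_factor:
  fixes \<phi> :: "real \<Rightarrow> real" and R :: "('i \<Rightarrow> real) \<Rightarrow> real"
  assumes "finite I" and "a \<in> I"
    and R: "integrable (gauss_PiM I) R" and \<phi>R: "integrable (gauss_PiM I) (\<lambda>g. \<phi> (g a) * R g)"
    and indep: "\<And>g y. g \<in> space (gauss_PiM I) \<Longrightarrow> R (g(a := y)) = R g"
  shows "(\<integral>g. \<phi> (g a) * R g \<partial>gauss_PiM I) = (\<integral>y. \<phi> y \<partial>std_gauss) * (\<integral>g. R g \<partial>gauss_PiM I)"
proof -
  define J where "J = I - {a}"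
  have I: "I = insert a J" and J: "finite J" "a \<notin> J"
    using assms(1,2) by (auto simp: J_def)
  define R0 where "R0 g = R (g(a := 0))" for g
  have R_upd: "R (g(a := y)) = R0 g" if "g \<in> space (gauss_PiM J)" for g y
  proof -
    have "g(a := 0) \<in> space (gauss_PiM I)"
      using that unfolding I space_PiM by (intro PiE_fun_upd) auto
    from indep[OF this, of y] show ?thesis by (simp add: R0_def)
  qed
  have "(\<integral>g. \<phi> (g a) * R g \<partial>gauss_PiM I) = (\<integral>g. (\<integral>y. \<phi> y * R0 g \<partial>std_gauss) \<partial>gauss_PiM J)"
    unfolding I using J \<phi>R I
    by (simp add: std_gauss_product.product_integral_insert R_upd
        cong: Bochner_Integration.integral_cong)
  also have "\<dots> = (\<integral>y. \<phi> y \<partial>std_gauss) * (\<integral>g. R0 g \<partial>gauss_PiM J)"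
    by (simp add: integral_mult_left_zero integral_mult_right_zero)
  also have "(\<integral>g. R0 g \<partial>gauss_PiM J) = (\<integral>g. (\<integral>y. R (g(a := y)) \<partial>std_gauss) \<partial>gauss_PiM J)"
    using prob_space.prob_space[OF prob_space_std_gauss]
    by (simp add: R_upd cong: Bochner_Integration.integral_cong)
  also have "\<dots> = (\<integral>g. R g \<partial>gauss_PiM I)"
    unfolding I using J R I by (simp add: std_gauss_product.product_integral_insert)
  finally show ?thesis .
qed

lemma integral_gauss_PiM_square_sum:
  fixes R :: "('i \<Rightarrow> real) \<Rightarrow> real"
  assumes "finite I" and "A \<subseteq> I" and R: "poly_growth I R"
    and indep: "\<And>g a y. g \<in> space (gauss_PiM I) \<Longrightarrow> a \<in> A \<Longrightarrow> R (g(a := y)) = R g"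
  shows "(\<integral>g. (\<Sum>a\<in>A. g a)\<^sup>2 * R g \<partial>gauss_PiM I) = card A * (\<integral>g. R g \<partial>gauss_PiM I)"
proof -
  have A: "finite A" using assms(1,2) by (rule finite_subset[rotated])
  have growth: "poly_growth I (\<lambda>g. g a * (g b * R g))" if "a \<in> A" "b \<in> A" for a b
    using that assms(1,2) R by (intro poly_growth_mult poly_growth_coordinate) auto
  have integrable: "integrable (gauss_PiM I) (\<lambda>g. g a * (g b * R g))" if "a \<in> A" "b \<in> A" for a b
    using poly_growth_integrable[OF assms(1) growth[OF that]] .
  have pair: "(\<integral>g. g a * (g b * R g) \<partial>gauss_PiM I) = (if a = b then (\<integral>g. R g \<partial>gauss_PiM I) else 0)"
    if ab: "a \<in> A" "b \<in> A" for a b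
  proof (cases "a = b")
    case True
    have "(\<integral>g. g a * (g b * R g) \<partial>gauss_PiM I) = (\<integral>g. (g a)\<^sup>2 * R g \<partial>gauss_PiM I)"
      using True by (simp add: power2_eq_square mult.assoc)
    also have "\<dots> = (\<integral>y. y\<^sup>2 \<partial>std_gauss) * (\<integral>g. R g \<partial>gauss_PiM I)"
      using integrable[OF ab] True assms(1,2) ab indep poly_growth_integrable[OF assms(1) R]
      by (intro integral_gauss_PiM_coordinate_factor) (auto simp: power2_eq_square mult.assoc)
    finally show ?thesis using True by (simp add: std_gauss_second_moment)
  next
    case False
    have "(\<integral>g. g a * (g b * R g) \<partial>gauss_PiM I) = (\<integral>y. y \<partial>std_gauss) * (\<integral>g. g b * R g \<partial>gauss_PiM I)"
      using integrable[OF ab] False assms(1,2) ab indep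
      by (intro integral_gauss_PiM_coordinate_factor poly_growth_integrable poly_growth_mult
          poly_growth_coordinate R) auto
    then show ?thesis using False by (simp add: std_gauss_mean)
  qed
  have "(\<integral>g. (\<Sum>a\<in>A. g a)\<^sup>2 * R g \<partial>gauss_PiM I) =
      (\<integral>g. (\<Sum>a\<in>A. \<Sum>b\<in>A. g a * (g b * R g)) \<partial>gauss_PiM I)"
    by (simp add: power2_eq_square sum_distrib_left sum_distrib_right mult.assoc mult.left_commute)
  also have "\<dots> = (\<Sum>a\<in>A. \<Sum>b\<in>A. (\<integral>g. g a * (g b * R g) \<partial>gauss_PiM I))"
    using integrable by (simp add: Bochner_Integration.integral_sum integrable_sum)
  also have "\<dots> = card A * (\<integral>g. R g \<partial>gauss_PiM I)"
    using A by (simp add: pair)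
  finally show ?thesis .
qed

section \<open>Entries of the Wigner tensor\<close>

lemma finite_tuples: "finite (tuples n p)"
proof -
  have "finite {xs. set xs \<subseteq> {..<n} \<and> length xs = p}"
    by (rule finite_lists_length_eq) simp
  then show ?thesis unfolding tuples_def by (simp add: conj_commute)
qed

definition tensor_indices :: "nat \<Rightarrow> nat \<Rightarrow> nat multiset set" where
  "tensor_indices n p = {S. size S = p \<and> set_mset S \<subseteq> {..<n}}"

definition permuted_tuple :: "nat \<Rightarrow> nat multiset \<Rightarrow> (nat \<Rightarrow> nat) \<Rightarrow> nat list" where
  "permuted_tuple p S \<pi> = map (\<lambda>k. sorted_list_of_multiset S ! \<pi> k) [0..<p]"

lemma wig_tensor_eq_sum:
  "wig_tensor p g S = (1 / sqrt (fact p)) * (\<Sum>\<pi>\<in>{\<pi>. \<pi> permutes {..<p}}. g (permuted_tuple p S \<pi>))"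
  unfolding wig_tensor_def permuted_tuple_def Let_def ..

lemma length_sorted_list_of_multiset: "length (sorted_list_of_multiset S) = size S"
  by (metis mset_sorted_list_of_multiset size_mset)

lemma permuted_tuple_eq_permute_list:
  "size S = p \<Longrightarrow> permuted_tuple p S \<pi> = permute_list \<pi> (sorted_list_of_multiset S)"
  unfolding permuted_tuple_def permute_list_def by (simp add: length_sorted_list_of_multiset)

lemma mset_permuted_tuple:
  assumes "\<pi> permutes {..<p}" and "size S = p"
  shows "mset (permuted_tuple p S \<pi>) = S"
  using assms
  by (simp add: permuted_tuple_eq_permute_list mset_permute_list length_sorted_list_of_multiset)

lemma permuted_tuple_in_tuples:
  assumes "\<pi> permutes {..<p}" and "S \<in> tensor_indices n p"
  shows "permuted_tuple p S \<pi> \<in> tuples n p"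
proof -
  have size: "size S = p" and sub: "set_mset S \<subseteq> {..<n}"
    using assms(2) unfolding tensor_indices_def by auto
  have "set (permuted_tuple p S \<pi>) = set_mset S"
    using mset_permuted_tuple[OF assms(1) size] by (metis set_mset_mset)
  moreover have "length (permuted_tuple p S \<pi>) = p"
    by (simp add: permuted_tuple_def)
  ultimately show ?thesis
    using sub by (simp add: tuples_def)
qed

lemma poly_growth_wig_tensor:
  "S \<in> tensor_indices n p \<Longrightarrow> poly_growth (tuples n p) (\<lambda>g. wig_tensor p g S)"
  unfolding wig_tensor_eq_sum
  by (intro poly_growth_mult poly_growth_const poly_growth_sum poly_growth_coordinate
      permuted_tuple_in_tuples finite_permutations finite_tuples) auto

lemma wig_tensor_cong:
  assumes "size S = p" and "\<And>l. mset l = S \<Longrightarrow> g l = g' l"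
  shows "wig_tensor p g S = wig_tensor p g' S"
  unfolding wig_tensor_eq_sum using assms by (simp add: mset_permuted_tuple)

lemma wig_tensor_negate_on:
  assumes "S' \<in> tensor_indices n p"
  shows "wig_tensor p (negate_on {l \<in> tuples n p. mset l = S} g) S' =
    (if S' = S then - wig_tensor p g S' else wig_tensor p g S')"
proof -
  have "wig_tensor p (negate_on {l \<in> tuples n p. mset l = S} g) S' =
      (1 / sqrt (fact p)) * (\<Sum>\<pi>\<in>{\<pi>. \<pi> permutes {..<p}}.
        if S' = S then - g (permuted_tuple p S' \<pi>) else g (permuted_tuple p S' \<pi>))"
    unfolding wig_tensor_eq_sum using assms
    by (intro arg_cong[where f="\<lambda>x. _ * x"] sum.cong)
      (auto simp: negate_on_def mset_permuted_tuple permuted_tuple_in_tuples tensor_indices_def)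
  then show ?thesis
    by (simp add: wig_tensor_eq_sum sum_negf)
qed

lemma inj_on_permuted_tuple:
  assumes size: "size S = p" and distinct: "\<forall>x. count S x \<le> 1"
  shows "inj_on (permuted_tuple p S) {\<pi>. \<pi> permutes {..<p}}"
proof (rule inj_onI, rule ext)
  define xs where "xs = sorted_list_of_multiset S"
  have len: "length xs = p"
    using size by (simp add: xs_def length_sorted_list_of_multiset)
  have "distinct xs"
    unfolding distinct_count_atmost_1
  proof
    fix a
    have "a \<in># S \<Longrightarrow> count S a = 1"
      using distinct[rule_format, of a] count_greater_zero_iff[of S a] by linarith
    then show "count (mset xs) a = (if a \<in> set xs then 1 else 0)"
      by (simp add: xs_def not_in_iff)
  qed
  fix \<pi> \<pi>' k assume \<pi>: "\<pi> \<in> {\<pi>. \<pi> permutes {..<p}}" and \<pi>': "\<pi>' \<in> {\<pi>. \<pi> permutes {..<p}}"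
    and eq: "permuted_tuple p S \<pi> = permuted_tuple p S \<pi>'"
  show "\<pi> k = \<pi>' k"
  proof (cases "k < p")
    case True
    then have "xs ! \<pi> k = xs ! \<pi>' k"
      using arg_cong[OF eq, of "\<lambda>ys. ys ! k"] by (simp add: permuted_tuple_def xs_def)
    moreover have "\<pi> k < p" "\<pi>' k < p"
      using \<pi> \<pi>' True permutes_in_image by fastforce+
    ultimately show ?thesis
      using \<open>distinct xs\<close> len by (simp add: nth_eq_iff_index_eq)
  next
    case False
    then show ?thesis using \<pi> \<pi>' by (simp add: permutes_not_in)
  qed
qed

lemma integral_wig_tensor_square_minus_one:
  assumes S: "S \<in> tensor_indices n p" and distinct: "\<forall>x. count S x \<le> 1"
    and R: "poly_growth (tuples n p) R"
    and indep: "\<And>g a y. g \<in> space (gauss_tensor n p) \<Longrightarrow> mset a = S \<Longrightarrow> R (g(a := y)) = R g"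
  shows "(\<integral>g. ((wig_tensor p g S)\<^sup>2 - 1) * R g \<partial>gauss_tensor n p) = 0"
proof -
  define A where "A = permuted_tuple p S ` {\<pi>. \<pi> permutes {..<p}}"
  have size: "size S = p"
    using S by (simp add: tensor_indices_def)
  note inj = inj_on_permuted_tuple[OF size distinct]
  have A_tuples: "A \<subseteq> tuples n p"
    using S by (auto simp: A_def permuted_tuple_in_tuples)
  have A_mset: "a \<in> A \<Longrightarrow> mset a = S" for a
    using size by (auto simp: A_def mset_permuted_tuple)
  have card_A: "card A = fact p"
    unfolding A_def using card_image[OF inj] card_permutations[of "{..<p}" p] by simp
  have W: "(wig_tensor p g S)\<^sup>2 = (\<Sum>a\<in>A. g a)\<^sup>2 / fact p" for g
    unfolding wig_tensor_eq_sum A_def sum.reindex[OF inj]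
    by (simp add: power_mult_distrib power_divide)
  have "(\<integral>g. (wig_tensor p g S)\<^sup>2 * R g \<partial>gauss_tensor n p) =
      (\<integral>g. (\<Sum>a\<in>A. g a)\<^sup>2 * R g \<partial>gauss_tensor n p) / fact p"
    by (simp add: W)
  also have "\<dots> = (\<integral>g. R g \<partial>gauss_tensor n p)"
    using integral_gauss_PiM_square_sum[OF finite_tuples A_tuples R] indep A_mset card_A
    by (simp add: gauss_tensor_def)
  finally have "(\<integral>g. (wig_tensor p g S)\<^sup>2 * R g \<partial>gauss_tensor n p) = (\<integral>g. R g \<partial>gauss_tensor n p)" .
  moreover have "integrable (gauss_tensor n p) (\<lambda>g. (wig_tensor p g S)\<^sup>2 * R g)"
    "integrable (gauss_tensor n p) R"
    unfolding gauss_tensor_def power2_eq_square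
    using S R
    by (auto intro!: poly_growth_integrable poly_growth_mult poly_growth_wig_tensor finite_tuples)
  ultimately show ?thesis
    by (simp add: left_diff_distrib)
qed

section \<open>Orthogonality of products of Wigner entries\<close>

definition tensor_monomial :: "'s set \<Rightarrow> 's set \<Rightarrow> ('s \<Rightarrow> real) \<Rightarrow> real" where
  "tensor_monomial A Q T = (\<Prod>S\<in>A. T S) * (\<Prod>S\<in>Q. (T S)\<^sup>2 - 1)"

lemma tensor_monomial_cong:
  "(\<And>S. S \<in> A \<union> Q \<Longrightarrow> T S = T' S) \<Longrightarrow> tensor_monomial A Q T = tensor_monomial A Q T'"
  unfolding tensor_monomial_def by (metis (no_types, lifting) UnCI prod.cong)

lemma tensor_monomial_remove:
  "finite Q \<Longrightarrow> S \<in> Q \<Longrightarrow> tensor_monomial A Q T = ((T S)\<^sup>2 - 1) * tensor_monomial A (Q - {S}) T"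
  unfolding tensor_monomial_def by (simp add: prod.remove mult_ac)

lemma poly_growth_wig_monomial:
  assumes "finite A" and "finite Q" and "A \<union> Q \<subseteq> tensor_indices n p"
  shows "poly_growth (tuples n p) (\<lambda>g. tensor_monomial A Q (wig_tensor p g))"
  unfolding tensor_monomial_def power2_eq_square using assms
  by (intro poly_growth_mult poly_growth_prod poly_growth_diff poly_growth_const
      poly_growth_wig_tensor) auto

lemma wig_monomial_negate_on:
  assumes "finite A" and "A \<union> Q \<subseteq> tensor_indices n p"
  shows "tensor_monomial A Q (wig_tensor p (negate_on {l \<in> tuples n p. mset l = S} g)) =
    (if S \<in> A then - 1 else 1) * tensor_monomial A Q (wig_tensor p g)"
proof -
  let ?W = "wig_tensor p g" and ?W' = "wig_tensor p (negate_on {l \<in> tuples n p. mset l = S} g)"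
  have "(\<Prod>S'\<in>A. ?W' S') = (\<Prod>S'\<in>A. (if S' = S then - 1 else 1) * ?W S')"
    using assms(2) by (intro prod.cong) (auto simp: wig_tensor_negate_on)
  also have "\<dots> = (if S \<in> A then - 1 else 1) * (\<Prod>S'\<in>A. ?W S')"
    using assms(1) by (simp add: prod.distrib prod.delta')
  finally have "(\<Prod>S'\<in>A. ?W' S') = (if S \<in> A then - 1 else 1) * (\<Prod>S'\<in>A. ?W S')" .
  moreover have "(\<Prod>S'\<in>Q. (?W' S')\<^sup>2 - 1) = (\<Prod>S'\<in>Q. (?W S')\<^sup>2 - 1)"
    using assms(2) by (intro prod.cong) (auto simp: wig_tensor_negate_on)
  ultimately show ?thesis
    unfolding tensor_monomial_def by simp
qed

lemma wig_monomial_update: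
  assumes "A \<union> Q \<subseteq> tensor_indices n p" and "mset a \<notin> A \<union> Q"
  shows "tensor_monomial A Q (wig_tensor p (g(a := y))) = tensor_monomial A Q (wig_tensor p g)"
  using assms by (intro tensor_monomial_cong wig_tensor_cong) (auto simp: tensor_indices_def)

lemma integral_wig_monomial_product_odd:
  assumes fin: "finite A1" "finite Q1" "finite A2" "finite Q2"
    and idx: "A1 \<union> Q1 \<union> A2 \<union> Q2 \<subseteq> tensor_indices n p"
    and S: "S \<in> A1" "S \<notin> A2"
  shows "(\<integral>g. tensor_monomial A1 Q1 (wig_tensor p g) * tensor_monomial A2 Q2 (wig_tensor p g)
    \<partial>gauss_tensor n p) = 0"
  unfolding gauss_tensor_def
proof (rule integral_gauss_PiM_odd[OF finite_tuples, of "{l \<in> tuples n p. mset l = S}"])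
  show "integrable (gauss_PiM (tuples n p))
      (\<lambda>g. tensor_monomial A1 Q1 (wig_tensor p g) * tensor_monomial A2 Q2 (wig_tensor p g))"
    using fin idx
    by (intro poly_growth_integrable finite_tuples poly_growth_mult poly_growth_wig_monomial) auto
  fix g
  show "tensor_monomial A1 Q1 (wig_tensor p (negate_on {l \<in> tuples n p. mset l = S} g)) *
      tensor_monomial A2 Q2 (wig_tensor p (negate_on {l \<in> tuples n p. mset l = S} g)) =
      - (tensor_monomial A1 Q1 (wig_tensor p g) * tensor_monomial A2 Q2 (wig_tensor p g))"
    using fin idx S by (simp add: wig_monomial_negate_on)
qed auto

lemma integral_wig_monomial_product_frobenius:
  assumes fin: "finite A1" "finite Q1" "finite A2" "finite Q2"
    and idx: "A1 \<union> Q1 \<union> A2 \<union> Q2 \<subseteq> tensor_indices n p"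
    and S: "S \<in> Q1" "S \<notin> A1" "S \<notin> A2 \<union> Q2" and distinct: "\<forall>x. count S x \<le> 1"
  shows "(\<integral>g. tensor_monomial A1 Q1 (wig_tensor p g) * tensor_monomial A2 Q2 (wig_tensor p g)
    \<partial>gauss_tensor n p) = 0"
proof -
  define R where
    "R g = tensor_monomial A1 (Q1 - {S}) (wig_tensor p g) * tensor_monomial A2 Q2 (wig_tensor p g)" for g
  have "(\<integral>g. tensor_monomial A1 Q1 (wig_tensor p g) * tensor_monomial A2 Q2 (wig_tensor p g)
      \<partial>gauss_tensor n p) = (\<integral>g. ((wig_tensor p g S)\<^sup>2 - 1) * R g \<partial>gauss_tensor n p)"
    using fin S by (simp add: R_def tensor_monomial_remove[of Q1 S] mult.assoc)
  also have "\<dots> = 0"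
  proof (rule integral_wig_tensor_square_minus_one)
    show "S \<in> tensor_indices n p" "\<forall>x. count S x \<le> 1" using idx S distinct by auto
    show "poly_growth (tuples n p) R"
      unfolding R_def using fin idx by (intro poly_growth_mult poly_growth_wig_monomial) auto
    show "R (g(a := y)) = R g" if "mset a = S" for g a y
    proof -
      have "tensor_monomial A1 (Q1 - {S}) (wig_tensor p (g(a := y))) =
          tensor_monomial A1 (Q1 - {S}) (wig_tensor p g)"
        "tensor_monomial A2 Q2 (wig_tensor p (g(a := y))) = tensor_monomial A2 Q2 (wig_tensor p g)"
        using idx S that by (auto intro!: wig_monomial_update)
      then show ?thesis unfolding R_def by simp
    qed
  qed
  finally show ?thesis .
qed

lemma integral_wig_monomial_orthogonal:
  assumes fin: "finite A1" "finite Q1" "finite A2" "finite Q2"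
    and idx: "A1 \<union> Q1 \<union> A2 \<union> Q2 \<subseteq> tensor_indices n p"
    and distinct: "\<forall>S\<in>Q1 \<union> Q2. \<forall>x. count S x \<le> 1"
    and disjoint: "A1 \<inter> Q1 = {}" "A2 \<inter> Q2 = {}"
    and neq: "(A1, Q1) \<noteq> (A2, Q2)"
  shows "(\<integral>g. tensor_monomial A1 Q1 (wig_tensor p g) * tensor_monomial A2 Q2 (wig_tensor p g)
    \<partial>gauss_tensor n p) = 0"
proof -
  have swap: "(\<integral>g. tensor_monomial A1 Q1 (wig_tensor p g) * tensor_monomial A2 Q2 (wig_tensor p g)
      \<partial>gauss_tensor n p) =
    (\<integral>g. tensor_monomial A2 Q2 (wig_tensor p g) * tensor_monomial A1 Q1 (wig_tensor p g)
      \<partial>gauss_tensor n p)"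
    by (simp add: mult.commute)
  consider S where "S \<in> A1" "S \<notin> A2" | S where "S \<in> A2" "S \<notin> A1"
    | S where "A1 = A2" "S \<in> Q1" "S \<notin> Q2" | S where "A1 = A2" "S \<in> Q2" "S \<notin> Q1"
    using neq by blast
  then show ?thesis
  proof cases
    case 1
    then show ?thesis by (rule integral_wig_monomial_product_odd[OF fin idx])
  next
    case 2
    have "A2 \<union> Q2 \<union> A1 \<union> Q1 \<subseteq> tensor_indices n p" using idx by auto
    from integral_wig_monomial_product_odd[OF fin(3,4,1,2) this 2] show ?thesis
      using swap by simp
  next
    case 3
    show ?thesis
      by (rule integral_wig_monomial_product_frobenius[OF fin idx, of S])
        (use 3 distinct disjoint in auto)
  next
    case 4
    have "A2 \<union> Q2 \<union> A1 \<union> Q1 \<subseteq> tensor_indices n p" using idx by auto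
    from integral_wig_monomial_product_frobenius[OF fin(3,4,1,2) this, of S] show ?thesis
      using 4 distinct disjoint swap by auto
  qed
qed

section \<open>Edge labellings of regular multigraphs\<close>

definition edge_labellings :: "nat \<Rightarrow> ('v, 'e) mgraph \<Rightarrow> ('e \<Rightarrow> nat) set" where
  "edge_labellings n G = {i \<in> edges G \<rightarrow>\<^sub>E {..<n}. inj_on i (edges G)}"

definition plain_labels :: "nat \<Rightarrow> ('v, 'e) mgraph \<Rightarrow> ('e \<Rightarrow> nat) \<Rightarrow> nat multiset set" where
  "plain_labels p G i = lab_at G i ` (verts G - frob_verts p G)"

definition frob_labels :: "nat \<Rightarrow> ('v, 'e) mgraph \<Rightarrow> ('e \<Rightarrow> nat) \<Rightarrow> nat multiset set" where
  "frob_labels p G i = lab_at G i ` frob_verts p G"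

lemma finite_edge_labellings: "finite (edges G) \<Longrightarrow> finite (edge_labellings n G)"
  unfolding edge_labellings_def
  by (rule finite_subset[of _ "edges G \<rightarrow>\<^sub>E {..<n}"]) (auto intro: finite_PiE)

lemma frob_pair_sym: "frob_pair p G u w \<Longrightarrow> frob_pair p G w u"
  unfolding frob_pair_def by (auto simp: add_mset_commute)

lemma frob_pair_unique:
  assumes "1 \<le> p" and uw: "frob_pair p G u w" and uw': "frob_pair p G u w'"
  shows "w = w'"
proof -
  have "{e \<in> edges G. ends G e = {#u, w#}} \<noteq> {}"
    using uw assms(1) unfolding frob_pair_def by (metis card.empty not_one_le_zero)
  then obtain e where "e \<in> edges G" "ends G e = {#u, w#}" by blast
  moreover from this have "ends G e = {#u, w'#}"
    using uw' by (simp add: frob_pair_def)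
  ultimately show ?thesis by simp
qed

lemma count_ends_frob_pair:
  assumes "frob_pair p G u w" and "e \<in> edges G"
  shows "count (ends G e) u = (if ends G e = {#u, w#} then 1 else 0)"
proof (cases "u \<in># ends G e")
  case True
  then have "ends G e = {#u, w#}" using assms by (simp add: frob_pair_def)
  then show ?thesis using assms(1) unfolding frob_pair_def by auto
next
  case False
  then show ?thesis by (auto simp: not_in_iff)
qed

lemma frob_verts_iff: "u \<in> frob_verts p G \<longleftrightarrow> (\<exists>w. frob_pair p G u w)"
  unfolding frob_verts_def by (auto simp: frob_pair_def)

lemma lab_at_cong:
  "(\<And>e. e \<in> edges G \<Longrightarrow> count (ends G e) v = count (ends G e) w) \<Longrightarrow> lab_at G i v = lab_at G i w"
  unfolding lab_at_def by (intro sum.cong) auto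

lemma lab_at_frob_pair_eq:
  assumes "frob_pair p G u w"
  shows "lab_at G i u = lab_at G i w"
proof (rule lab_at_cong)
  fix e assume "e \<in> edges G"
  then show "count (ends G e) u = count (ends G e) w"
    using count_ends_frob_pair[OF assms] count_ends_frob_pair[OF frob_pair_sym[OF assms]]
    by (simp add: add_mset_commute)
qed

lemma count_image_mset_inj_on:
  "inj_on f V \<Longrightarrow> set_mset M \<subseteq> V \<Longrightarrow> v \<in> V \<Longrightarrow> count (image_mset f M) (f v) = count M v"
proof (induction M)
  case (add x M)
  then have "f v = f x \<longleftrightarrow> v = x" by (auto dest: inj_onD)
  with add show ?case by auto
qed simp

lemma ex_bij_betw_fibers:
  assumes "finite A" and "finite B" and fibers: "\<And>m. card {a\<in>A. f a = m} = card {b\<in>B. g b = m}"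
  shows "\<exists>\<phi>. bij_betw \<phi> A B \<and> (\<forall>a\<in>A. g (\<phi> a) = f a)"
proof -
  have "\<exists>\<psi>. bij_betw \<psi> {a\<in>A. f a = m} {b\<in>B. g b = m}" for m
    using assms by (intro finite_same_card_bij) auto
  then obtain \<Psi> where \<Psi>: "\<And>m. bij_betw (\<Psi> m) {a\<in>A. f a = m} {b\<in>B. g b = m}" by metis
  define \<phi> where "\<phi> a = \<Psi> (f a) a" for a
  have \<phi>_fiber: "a \<in> A \<Longrightarrow> \<phi> a \<in> {b\<in>B. g b = f a}" for a
    unfolding \<phi>_def using bij_betw_apply[OF \<Psi>[of "f a"], of a] by simp
  have "inj_on \<phi> A"
  proof
    fix a a' assume a: "a \<in> A" "a' \<in> A" "\<phi> a = \<phi> a'"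
    then have "f a = f a'" using \<phi>_fiber[of a] \<phi>_fiber[of a'] by auto
    then show "a = a'"
      using a bij_betw_imp_inj_on[OF \<Psi>[of "f a"]] unfolding \<phi>_def by (auto dest: inj_onD)
  qed
  moreover have "B \<subseteq> \<phi> ` A"
  proof
    fix b assume "b \<in> B"
    then obtain a where a: "a \<in> A" "f a = g b" "b = \<Psi> (g b) a"
      using bij_betw_imp_surj_on[OF \<Psi>[of "g b"]] by force
    then have "\<phi> a = b" unfolding \<phi>_def by simp
    with a(1) show "b \<in> \<phi> ` A" by blast
  qed
  ultimately show ?thesis
    using \<phi>_fiber unfolding bij_betw_def by blast
qed

lemma size_2_mset_eqI:
  assumes "size M = 2" and "v \<in># M" and "w \<in># M" and "v \<noteq> w"
  shows "M = {#v, w#}"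
proof -
  have "size (M - {#v#}) = 1" using assms(1,2) by (simp add: size_Diff_singleton)
  then obtain a where a: "M - {#v#} = {#a#}" using size_1_singleton_mset by blast
  have "w \<in># M - {#v#}" using assms(3,4) by (simp add: in_diff_count)
  with a have "M - {#v#} = {#w#}" by simp
  with assms(2) show ?thesis by (metis insert_DiffM)
qed

locale regular_edge_labelling =
  fixes p n :: nat and G :: "('v, 'e) mgraph" and i :: "'e \<Rightarrow> nat"
  assumes regular: "regular p G" and p_pos: "1 \<le> p" and labelling: "i \<in> edge_labellings n G"
begin

abbreviation L :: "'v \<Rightarrow> nat multiset" where
  "L \<equiv> lab_at G i"

lemma finite_verts: "finite (verts G)"
  and finite_edges: "finite (edges G)"
  and size_ends: "e \<in> edges G \<Longrightarrow> size (ends G e) = 2"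
  and ends_subset_verts: "e \<in> edges G \<Longrightarrow> set_mset (ends G e) \<subseteq> verts G"
  using regular by (auto simp: regular_def wf_mgraph_def)

lemma inj_labelling: "inj_on i (edges G)"
  using labelling by (simp add: edge_labellings_def)

lemma count_lab_at: "e \<in> edges G \<Longrightarrow> count (L v) (i e) = count (ends G e) v"
proof -
  assume e: "e \<in> edges G"
  have "count (L v) (i e) = (\<Sum>e'\<in>edges G. if e' = e then count (ends G e') v else 0)"
    unfolding lab_at_def count_sum count_replicate_mset
    using e inj_labelling by (intro sum.cong refl) (auto dest: inj_onD)
  then show ?thesis using e finite_edges by simp
qed

lemma count_lab_at_unlabelled: "x \<notin> i ` edges G \<Longrightarrow> count (L v) x = 0"
  unfolding lab_at_def count_sum count_replicate_mset by (auto intro!: sum.neutral)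

lemma set_mset_lab_at: "set_mset (L v) \<subseteq> i ` edges G"
  using count_lab_at_unlabelled by (metis count_eq_zero_iff subsetI)

lemma lab_at_in_tensor_indices: "v \<in> verts G \<Longrightarrow> L v \<in> tensor_indices n p"
  using regular set_mset_lab_at[of v] labelling
  by (auto simp: tensor_indices_def lab_at_def size_multiset_sum regular_def mdeg_def
      edge_labellings_def PiE_iff)

lemma frob_pair_of_lab_at_eq:
  assumes v: "v \<in> verts G" and w: "w \<in> verts G" and "v \<noteq> w" and eq: "L v = L w"
  shows "frob_pair p G v w"
proof -
  have count_eq: "count (ends G e) v = count (ends G e) w" if "e \<in> edges G" for e
    using count_lab_at[OF that, of v] count_lab_at[OF that, of w] eq by simp
  have ends: "ends G e = {#v, w#}" if e: "e \<in> edges G" and "v \<in># ends G e \<or> w \<in># ends G e" for e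
  proof -
    have "v \<in># ends G e" "w \<in># ends G e"
      using that count_eq[OF e] by (simp_all flip: count_greater_zero_iff)
    then show ?thesis
      using size_ends[OF e] \<open>v \<noteq> w\<close> by (intro size_2_mset_eqI)
  qed
  have count_v: "count (ends G e) v = (if ends G e = {#v, w#} then 1 else 0)"
    if e: "e \<in> edges G" for e
  proof (cases "v \<in># ends G e")
    case True
    then show ?thesis using ends[OF e] \<open>v \<noteq> w\<close> by simp
  next
    case False
    then show ?thesis using \<open>v \<noteq> w\<close> by (auto simp: not_in_iff)
  qed
  have "p = mdeg G v"
    using regular v by (simp add: regular_def)
  also have "\<dots> = (\<Sum>e\<in>edges G. if ends G e = {#v, w#} then 1 else 0)"
    unfolding mdeg_def by (intro sum.cong refl count_v)
  also have "\<dots> = card {e \<in> edges G. ends G e = {#v, w#}}"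
    using finite_edges by (simp add: sum.inter_filter[symmetric])
  finally show ?thesis
    unfolding frob_pair_def using v w \<open>v \<noteq> w\<close> ends by blast
qed

lemma count_lab_at_frob_pair_le_1:
  assumes "frob_pair p G u w"
  shows "count (L u) x \<le> 1"
proof (cases "x \<in> i ` edges G")
  case True
  then obtain e where "e \<in> edges G" "x = i e" by blast
  then show ?thesis using count_lab_at count_ends_frob_pair[OF assms] by simp
qed (simp add: count_lab_at_unlabelled)

lemma lab_pair_frob_pair:
  assumes uw: "frob_pair p G u w"
  shows "lab_pair G i {u, w} = L u"
proof -
  define E' where "E' = {e \<in> edges G. set_mset (ends G e) = {u, w}}"
  have ends_iff: "ends G e = {#u, w#} \<longleftrightarrow> set_mset (ends G e) = {u, w}" if "e \<in> edges G" for e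
    using uw that by (auto simp: frob_pair_def)
  have "L u = (\<Sum>e\<in>edges G. if set_mset (ends G e) = {u, w} then {#i e#} else {#})"
    unfolding lab_at_def using uw by (intro sum.cong refl) (simp add: count_ends_frob_pair ends_iff)
  also have "\<dots> = (\<Sum>e\<in>E'. {#i e#})"
    unfolding E'_def using finite_edges by (simp add: sum.inter_filter)
  also have "\<dots> = mset_set (i ` E')"
    using inj_on_subset[OF inj_labelling]
    by (simp add: E'_def sum.reindex flip: sum_multiset_singleton)
  also have "\<dots> = lab_pair G i {u, w}"
    unfolding lab_pair_def E'_def using inj_on_subset[OF inj_labelling]
    by (simp add: image_mset_mset_set)
  finally show ?thesis by simp
qed

lemma lab_at_plain_unique:
  assumes "v \<in> verts G - frob_verts p G" and "w \<in> verts G" and "L w = L v"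
  shows "w = v"
  using assms frob_pair_of_lab_at_eq[of v w] by (auto simp: frob_verts_def)

lemma inj_on_lab_at_plain: "inj_on L (verts G - frob_verts p G)"
  using lab_at_plain_unique by (intro inj_onI) blast

lemma plain_frob_labels_disjoint: "plain_labels p G i \<inter> frob_labels p G i = {}"
proof -
  have neq: "L u \<noteq> L v" if v: "v \<in> verts G - frob_verts p G" and u: "u \<in> frob_verts p G" for u v
  proof
    assume "L u = L v"
    moreover have "u \<in> verts G" using u by (simp add: frob_verts_def)
    ultimately have "u = v" using lab_at_plain_unique[OF v] by simp
    with u v show False by simp
  qed
  show ?thesis
    unfolding plain_labels_def frob_labels_def
  proof (intro equals0I)
    fix S assume "S \<in> L ` (verts G - frob_verts p G) \<inter> L ` frob_verts p G"
    then obtain v u where "v \<in> verts G - frob_verts p G" "u \<in> frob_verts p G" "S = L v" "S = L u"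
      by blast
    with neq[of v u] show False by simp
  qed
qed

lemma labels_in_tensor_indices: "plain_labels p G i \<union> frob_labels p G i \<subseteq> tensor_indices n p"
  using lab_at_in_tensor_indices by (auto simp: plain_labels_def frob_labels_def frob_verts_def)

lemma frob_labels_distinct: "S \<in> frob_labels p G i \<Longrightarrow> count S x \<le> 1"
  using count_lab_at_frob_pair_le_1 by (auto simp: frob_labels_def frob_verts_iff)

lemma finite_labels: "finite (plain_labels p G i)" "finite (frob_labels p G i)"
  using finite_verts by (auto simp: plain_labels_def frob_labels_def frob_verts_def)

lemma lab_at_fiber_plain:
  assumes "v \<in> verts G - frob_verts p G"
  shows "{x \<in> verts G. L x = L v} = {v}"
  using assms lab_at_plain_unique by auto

lemma lab_at_fiber_frob_pair:
  assumes uw: "frob_pair p G u w"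
  shows "{x \<in> verts G. L x = L u} = {u, w}"
proof
  show "{u, w} \<subseteq> {x \<in> verts G. L x = L u}"
    using uw lab_at_frob_pair_eq[OF uw] by (auto simp: frob_pair_def)
  show "{x \<in> verts G. L x = L u} \<subseteq> {u, w}"
  proof
    fix x assume x: "x \<in> {x \<in> verts G. L x = L u}"
    show "x \<in> {u, w}"
    proof (cases "x = u")
      case False
      then have "frob_pair p G u x"
        using x uw by (intro frob_pair_of_lab_at_eq) (auto simp: frob_pair_def)
      then show ?thesis using frob_pair_unique[OF p_pos uw] by simp
    qed simp
  qed
qed

lemma card_lab_at_fiber:
  "card {v \<in> verts G. L v = S} =
    (if S \<in> plain_labels p G i then 1 else if S \<in> frob_labels p G i then 2 else 0)"
proof (cases "S \<in> plain_labels p G i")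
  case True
  then obtain v where "v \<in> verts G - frob_verts p G" "S = L v"
    by (auto simp: plain_labels_def)
  then show ?thesis using True lab_at_fiber_plain by simp
next
  case not_plain: False
  show ?thesis
  proof (cases "S \<in> frob_labels p G i")
    case True
    then obtain u w where uw: "frob_pair p G u w" "S = L u"
      by (auto simp: frob_labels_def frob_verts_iff)
    moreover have "u \<noteq> w"
      using uw(1) by (simp add: frob_pair_def)
    ultimately show ?thesis
      using True not_plain lab_at_fiber_frob_pair by simp
  next
    case False
    then have empty: "{v \<in> verts G. L v = S} = {}"
      using not_plain by (auto simp: plain_labels_def frob_labels_def)
    show ?thesis using False not_plain by (simp only: empty card.empty if_False)
  qed
qed

lemma inj_on_lab_pair: "inj_on (lab_pair G i) (frob_pairs p G)"
proof (rule inj_onI)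
  fix P P' assume "P \<in> frob_pairs p G" "P' \<in> frob_pairs p G"
    and eq: "lab_pair G i P = lab_pair G i P'"
  then obtain u w u' w' where P: "P = {u, w}" "frob_pair p G u w"
    and P': "P' = {u', w'}" "frob_pair p G u' w'"
    by (auto simp: frob_pairs_def)
  have "L u = lab_pair G i P"
    unfolding P(1) by (rule lab_pair_frob_pair[OF P(2), symmetric])
  also have "\<dots> = L u'"
    unfolding eq P'(1) by (rule lab_pair_frob_pair[OF P'(2)])
  finally have "L u = L u'" .
  show "P = P'"
  proof (cases "u = u'")
    case True
    then have "w = w'"
      using frob_pair_unique[OF p_pos P(2)] P'(2) by simp
    then show ?thesis
      using P(1) P'(1) True by simp
  next
    case False
    then have uu': "frob_pair p G u u'"
      using \<open>L u = L u'\<close> P(2) P'(2) by (intro frob_pair_of_lab_at_eq) (auto simp: frob_pair_def)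
    have "u' = w" "w' = u"
      using frob_pair_unique[OF p_pos P(2) uu']
        frob_pair_unique[OF p_pos P'(2) frob_pair_sym[OF uu']] by simp_all
    then show ?thesis using P P' by auto
  qed
qed

lemma lab_pair_image_frob_pairs: "lab_pair G i ` frob_pairs p G = frob_labels p G i"
proof
  show "lab_pair G i ` frob_pairs p G \<subseteq> frob_labels p G i"
  proof
    fix S assume "S \<in> lab_pair G i ` frob_pairs p G"
    then obtain u w where uw: "frob_pair p G u w" "S = lab_pair G i {u, w}"
      by (auto simp: frob_pairs_def)
    then have "u \<in> frob_verts p G"
      unfolding frob_verts_iff by blast
    then show "S \<in> frob_labels p G i"
      unfolding frob_labels_def by (simp add: uw lab_pair_frob_pair)
  qed
  show "frob_labels p G i \<subseteq> lab_pair G i ` frob_pairs p G"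
  proof
    fix S assume "S \<in> frob_labels p G i"
    then obtain u w where "frob_pair p G u w" "S = L u"
      by (auto simp: frob_labels_def frob_verts_iff)
    then have "S = lab_pair G i {u, w}" "{u, w} \<in> frob_pairs p G"
      by (auto simp: lab_pair_frob_pair frob_pairs_def)
    then show "S \<in> lab_pair G i ` frob_pairs p G" by blast
  qed
qed

lemma mc_summand_eq_tensor_monomial:
  "(\<Prod>v\<in>verts G - frob_verts p G. T (L v)) * (\<Prod>P\<in>frob_pairs p G. (T (lab_pair G i P))\<^sup>2 - 1) =
    tensor_monomial (plain_labels p G i) (frob_labels p G i) T"
proof -
  have "(\<Prod>v\<in>verts G - frob_verts p G. T (L v)) = (\<Prod>S\<in>plain_labels p G i. T S)"
    unfolding plain_labels_def by (simp add: prod.reindex[OF inj_on_lab_at_plain])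
  moreover have "(\<Prod>P\<in>frob_pairs p G. (T (lab_pair G i P))\<^sup>2 - 1) =
      (\<Prod>S\<in>frob_labels p G i. (T S)\<^sup>2 - 1)"
    using inj_on_lab_pair lab_pair_image_frob_pairs
    by (intro prod.reindex_bij_betw bij_betw_imageI)
  ultimately show ?thesis
    unfolding tensor_monomial_def by simp
qed

lemma labels_cover_edges: "i ` edges G = (\<Union>v\<in>verts G. set_mset (L v))"
proof
  show "i ` edges G \<subseteq> (\<Union>v\<in>verts G. set_mset (L v))"
  proof
    fix x assume "x \<in> i ` edges G"
    then obtain e where e: "e \<in> edges G" "x = i e" by blast
    have "ends G e \<noteq> {#}"
      using size_ends[OF e(1)] by auto
    then obtain v where "v \<in># ends G e" by blast
    then have "v \<in> verts G"
      using ends_subset_verts[OF e(1)] by auto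
    moreover have "x \<in># L v"
      using count_lab_at[OF e(1), of v] \<open>v \<in># ends G e\<close> e(2) by (simp flip: count_greater_zero_iff)
    ultimately show "x \<in> (\<Union>v\<in>verts G. set_mset (L v))" by blast
  qed
  show "(\<Union>v\<in>verts G. set_mset (L v)) \<subseteq> i ` edges G"
    using set_mset_lab_at by blast
qed

end

lemma ends_eq_image_of_lab_at_preserving:
  assumes G: "regular_edge_labelling p n G i" and H: "regular_edge_labelling p n H j"
    and inj_\<phi>: "inj_on \<phi> (verts G)" and image_\<phi>: "\<phi> ` verts G = verts H"
    and lab: "\<And>v. v \<in> verts G \<Longrightarrow> lab_at H j (\<phi> v) = lab_at G i v"
    and e: "e \<in> edges G" and e': "e' \<in> edges H" and same_label: "j e' = i e"
  shows "ends H e' = image_mset \<phi> (ends G e)"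
proof (rule multiset_eqI)
  interpret g: regular_edge_labelling p n G i by fact
  interpret h: regular_edge_labelling p n H j by fact
  fix x
  show "count (ends H e') x = count (image_mset \<phi> (ends G e)) x"
  proof (cases "x \<in> verts H")
    case True
    then obtain v where v: "v \<in> verts G" "x = \<phi> v" using image_\<phi> by auto
    have "count (ends H e') x = count (lab_at G i v) (i e)"
      using h.count_lab_at[OF e', of x] v lab same_label by simp
    also have "\<dots> = count (image_mset \<phi> (ends G e)) x"
      using g.count_lab_at[OF e] v(2)
        count_image_mset_inj_on[OF inj_\<phi> g.ends_subset_verts[OF e] v(1)] by simp
    finally show ?thesis .
  next
    case False
    then have "x \<notin># ends H e'" "x \<notin># image_mset \<phi> (ends G e)"
      using h.ends_subset_verts[OF e'] g.ends_subset_verts[OF e] image_\<phi> by auto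
    then show ?thesis by (simp only: not_in_iff)
  qed
qed

lemma mgraph_iso_of_lab_at_preserving_bij:
  assumes G: "regular_edge_labelling p n G i" and H: "regular_edge_labelling p n H j"
    and bij: "bij_betw \<phi> (verts G) (verts H)"
    and lab: "\<And>v. v \<in> verts G \<Longrightarrow> lab_at H j (\<phi> v) = lab_at G i v"
  shows "mgraph_iso G H"
proof -
  interpret g: regular_edge_labelling p n G i by fact
  interpret h: regular_edge_labelling p n H j by fact
  have inj_\<phi>: "inj_on \<phi> (verts G)" and image_\<phi>: "\<phi> ` verts G = verts H"
    using bij by (auto simp: bij_betw_def)
  have same_labels: "i ` edges G = j ` edges H"
    unfolding g.labels_cover_edges h.labels_cover_edges image_\<phi>[symmetric] using lab by simp
  define \<psi> where "\<psi> e = the_inv_into (edges H) j (i e)" for e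
  have bij_\<psi>: "bij_betw \<psi> (edges G) (edges H)"
    unfolding \<psi>_def
    using bij_betw_trans[OF inj_on_imp_bij_betw[OF g.inj_labelling, unfolded same_labels]
        bij_betw_the_inv_into[OF inj_on_imp_bij_betw[OF h.inj_labelling]]]
    by (simp add: comp_def)
  have "j (\<psi> e) = i e" if "e \<in> edges G" for e
    unfolding \<psi>_def using that same_labels h.inj_labelling by (intro f_the_inv_into_f) auto
  then have "ends H (\<psi> e) = image_mset \<phi> (ends G e)" if "e \<in> edges G" for e
    using that bij_betw_apply[OF bij_\<psi> that]
    by (intro ends_eq_image_of_lab_at_preserving[OF G H inj_\<phi> image_\<phi> lab])
  then show ?thesis
    unfolding mgraph_iso_def using bij bij_\<psi> by blast
qed

lemma mgraph_iso_of_equal_labels: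
  assumes G: "regular_edge_labelling p n G i" and H: "regular_edge_labelling p n H j"
    and "plain_labels p G i = plain_labels p H j" and "frob_labels p G i = frob_labels p H j"
  shows "mgraph_iso G H"
proof -
  interpret g: regular_edge_labelling p n G i by fact
  interpret h: regular_edge_labelling p n H j by fact
  have "card {v \<in> verts G. lab_at G i v = S} = card {w \<in> verts H. lab_at H j w = S}" for S
    unfolding g.card_lab_at_fiber h.card_lab_at_fiber using assms(3,4) by simp
  then obtain \<phi> where "bij_betw \<phi> (verts G) (verts H)" "\<forall>v\<in>verts G. lab_at H j (\<phi> v) = lab_at G i v"
    using ex_bij_betw_fibers[OF g.finite_verts h.finite_verts] by blast
  then show ?thesis
    using mgraph_iso_of_lab_at_preserving_bij[OF G H] by blast
qed

lemma mc_eq_sum_tensor_monomial: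
  assumes "regular p G" and "1 \<le> p"
  shows "mc n p G T =
    (\<Sum>i\<in>edge_labellings n G. tensor_monomial (plain_labels p G i) (frob_labels p G i) T)"
  unfolding mc_def edge_labellings_def[symmetric]
proof (rule sum.cong[OF refl])
  fix i assume "i \<in> edge_labellings n G"
  then interpret regular_edge_labelling p n G i
    using assms by unfold_locales
  show "(\<Prod>v\<in>verts G - frob_verts p G. T (lab_at G i v)) *
      (\<Prod>P\<in>frob_pairs p G. (T (lab_pair G i P))\<^sup>2 - 1) =
      tensor_monomial (plain_labels p G i) (frob_labels p G i) T"
    by (rule mc_summand_eq_tensor_monomial)
qed

definition wig_labelled_monomial :: "nat \<Rightarrow> ('v, 'e) mgraph \<Rightarrow> ('e \<Rightarrow> nat) \<Rightarrow> (nat list \<Rightarrow> real) \<Rightarrow> real"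
  where "wig_labelled_monomial p G i g =
    tensor_monomial (plain_labels p G i) (frob_labels p G i) (wig_tensor p g)"

lemma (in regular_edge_labelling) poly_growth_wig_labelled_monomial:
  "poly_growth (tuples n p) (wig_labelled_monomial p G i)"
  unfolding wig_labelled_monomial_def
  using finite_labels labels_in_tensor_indices by (rule poly_growth_wig_monomial)

lemma integral_wig_labelled_monomials_orthogonal:
  assumes G: "regular_edge_labelling p n G i" and H: "regular_edge_labelling p n H j"
    and not_iso: "\<not> mgraph_iso G H"
  shows "(\<integral>g. wig_labelled_monomial p G i g * wig_labelled_monomial p H j g \<partial>gauss_tensor n p) = 0"
  unfolding wig_labelled_monomial_def
proof (rule integral_wig_monomial_orthogonal)
  interpret g: regular_edge_labelling p n G i by fact
  interpret h: regular_edge_labelling p n H j by fact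
  show "plain_labels p G i \<union> frob_labels p G i \<union> plain_labels p H j \<union> frob_labels p H j
      \<subseteq> tensor_indices n p"
    using g.labels_in_tensor_indices h.labels_in_tensor_indices by blast
  show "\<forall>S\<in>frob_labels p G i \<union> frob_labels p H j. \<forall>x. count S x \<le> 1"
    using g.frob_labels_distinct h.frob_labels_distinct by blast
  show "(plain_labels p G i, frob_labels p G i) \<noteq> (plain_labels p H j, frob_labels p H j)"
    using mgraph_iso_of_equal_labels[OF G H] not_iso by auto
qed (use G H in \<open>auto simp: regular_edge_labelling.finite_labels
    regular_edge_labelling.plain_frob_labels_disjoint\<close>)

theorem proposition4p7:
  fixes n p :: nat
    and G :: "('v,'e) mgraph" and H :: "('w,'f) mgraph"
  assumes "p \<ge> 1"
    and "regular p G" and "regular p H"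
    and "\<not> mgraph_iso G H"
  shows "integrable (gauss_tensor n p)
           (\<lambda>g. mc n p G (wig_tensor p g) * mc n p H (wig_tensor p g))
         \<and> (\<integral>g. mc n p G (wig_tensor p g) * mc n p H (wig_tensor p g) \<partial>gauss_tensor n p) = 0"
proof -
  define \<Lambda> where "\<Lambda> = edge_labellings n G \<times> edge_labellings n H"
  have labelled: "regular_edge_labelling p n G (fst ij)" "regular_edge_labelling p n H (snd ij)"
    if "ij \<in> \<Lambda>" for ij
    using that assms by (auto simp: \<Lambda>_def regular_edge_labelling_def)
  have "finite \<Lambda>"
    using assms(2,3) by (simp add: \<Lambda>_def finite_edge_labellings regular_def wf_mgraph_def)
  have expand: "mc n p G (wig_tensor p g) * mc n p H (wig_tensor p g) =
      (\<Sum>ij\<in>\<Lambda>. wig_labelled_monomial p G (fst ij) g * wig_labelled_monomial p H (snd ij) g)" for g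
    unfolding mc_eq_sum_tensor_monomial[OF assms(2,1)] mc_eq_sum_tensor_monomial[OF assms(3,1)]
    by (simp add: wig_labelled_monomial_def \<Lambda>_def sum_product sum.cartesian_product prod.case_eq_if)
  have "integrable (gauss_tensor n p)
      (\<lambda>g. wig_labelled_monomial p G (fst ij) g * wig_labelled_monomial p H (snd ij) g)"
    if "ij \<in> \<Lambda>" for ij
    unfolding gauss_tensor_def
    using labelled[OF that, THEN regular_edge_labelling.poly_growth_wig_labelled_monomial]
    by (intro poly_growth_integrable finite_tuples poly_growth_mult)
  moreover have "(\<integral>g. wig_labelled_monomial p G (fst ij) g * wig_labelled_monomial p H (snd ij) g
      \<partial>gauss_tensor n p) = 0" if "ij \<in> \<Lambda>" for ij
    using labelled[OF that] assms(4) by (rule integral_wig_labelled_monomials_orthogonal)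
  ultimately show ?thesis
    unfolding expand using \<open>finite \<Lambda>\<close> by simp
qed

end
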